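(* Suppose the difference-in-means estimator $\widehat\tau_{DIM}$ is computed from outcomes generated under a balanced $K$-cluster randomized design $\mathcal{D}(\mathcal{C})$, and the potential outcomes follow the linear model $Y_i(\mathbf{Z}) = \alpha_i + \beta_i Z_i + \gamma_i e_i(\mathbf{Z})$ with fixed real coefficients $\alpha_i,\beta_i,\gamma_i$. Then $$\tau - \mathbb{E}_{\mathbf{Z}\sim\mathcal{D}(\mathcal{C})}[\widehat\tau_{DIM}] = \frac{2}{N}\cdot\frac{K}{K-1}\sum_{i\in[N]}\sum_{j\notin\mathcal{C}(i)} \gamma_i \sum_{s\in[M]} \frac{w_{is}}{\sum_{s'\in[M]} w_{is'}}\,\frac{w_{js}}{\sum_{k\in[N]} w_{ks}}.$$ Moreover, fix real numbers $\Gamma_0\le\Gamma_1$, not both zero. Then, among all partitions $\mathcal{C}$ of $[N]$ into $K$ equally sized clusters (with $K$ and $K_T$ fixed), the set of minimizers of $\max_{\boldsymbol\gamma\in[\Gamma_0,\Gamma_1]^N}\left|\tau-\mathbb{E}_{\mathbf{Z}\sim\mathcal{D}(\mathcal{C})}[\widehat\tau_{DIM}]\right|$ equals the set of minimizers of $\mathcal{H}(\mathcal{C})$.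
   Context: Setting: $N$ experimental units $[N]$ and $M$ interference units $[M]$, with known weights $w_{is}\ge 0$ for $i\in[N]$, $s\in[M]$; assume $\sum_{s} w_{is}>0$ for every $i$ and $\sum_i w_{is}>0$ for every $s$. A treatment assignment is $\mathbf{Z}\in\{-1,1\}^N$ ($1$ = treatment, $-1$ = control). The dose of interference unit $s$ is $d_s=\frac{\sum_{i\in[N]} w_{is}Z_i}{\sum_{i\in[N]} w_{is}}$ and the exposure of experimental unit $i$ is $e_i=e_i(\mathbf{Z})=\frac{\sum_{s\in[M]} w_{is}d_s}{\sum_{s\in[M]} w_{is}}$. Balanced $K$-cluster randomized design: $K\ge 2$ divides $N$, $\mathcal{C}=\{C_1,\dots,C_K\}$ is a partition of $[N]$ into $K$ clusters of equal size $N/K$, $\mathcal{C}(i)$ denotes the cluster containing $i$, and $\mathcal{D}(\mathcal{C})$ is the distribution of $\mathbf{Z}$ obtained by choosing $K_T$ clusters uniformly at random (fixed integer $0<K_T<K$), setting $Z_i=1$ for all units in these clusters and $Z_i=-1$ otherwise; $K_C=K-K_T$. Let $N_T=NK_T/K$ and $N_C=N-N_T$ (numbers of treated and control units). The difference-in-means estimator is $\widehat\tau_{DIM}=\frac{1}{N_T}\sum_{i:Z_i=1}Y_i-\frac{1}{N_C}\sum_{i:Z_i=-1}Y_i$, where $Y_i=Y_i(\mathbf{Z})$ is the observed outcome. The average total treatment effect is $\tau=\frac1N\sum_{i\in[N]}\big(Y_i(\mathbf{1})-Y_i(-\mathbf{1})\big)$. The clustering objective is $\mathcal{H}(\mathcal{C})=\sum_{i\in[N]}\sum_{j\in[N]\setminus\mathcal{C}(i)}\sum_{s\in[M]}\frac{w_{is}}{\sum_{s'\in[M]}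 w_{is'}}\frac{w_{js}}{\sum_{k\in[N]} w_{ks}}$. *)

theory Defs
  imports "HOL-Probability.Probability"
begin

text \<open>Experimental units are 0..<N, interference units are 0..<M,
  weights w i s. Assignments are functions Z :: nat => real with values 1/-1.\<close>

definition dose :: "(nat \<Rightarrow> nat \<Rightarrow> real) \<Rightarrow> nat \<Rightarrow> nat \<Rightarrow> (nat \<Rightarrow> real) \<Rightarrow> real" where
  "dose w N s Z = (\<Sum>i<N. w i s * Z i) / (\<Sum>i<N. w i s)"

definition exposure :: "(nat \<Rightarrow> nat \<Rightarrow> real) \<Rightarrow> nat \<Rightarrow> nat \<Rightarrow> nat \<Rightarrow> (nat \<Rightarrow> real) \<Rightarrow> real" where
  "exposure w N M i Z = (\<Sum>s<M. w i s * dose w N s Z) / (\<Sum>s<M. w i s)"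

definition lin_outcome ::
  "(nat \<Rightarrow> nat \<Rightarrow> real) \<Rightarrow> nat \<Rightarrow> nat \<Rightarrow> (nat \<Rightarrow> real) \<Rightarrow> (nat \<Rightarrow> real) \<Rightarrow> (nat \<Rightarrow> real)
    \<Rightarrow> nat \<Rightarrow> (nat \<Rightarrow> real) \<Rightarrow> real" where
  "lin_outcome w N M \<alpha> \<beta> \<gamma> i Z = \<alpha> i + \<beta> i * Z i + \<gamma> i * exposure w N M i Z"

definition balanced_partition :: "nat \<Rightarrow> nat \<Rightarrow> nat set set \<Rightarrow> bool" where
  "balanced_partition N K C \<longleftrightarrow> partition_on {..<N} C \<and> card C = K \<and> (\<forall>c\<in>C. card c = N div K)"

definition cluster_of :: "nat set set \<Rightarrow> nat \<Rightarrow> nat set" where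
  "cluster_of C i = (THE c. c \<in> C \<and> i \<in> c)"

definition cluster_assign :: "nat set set \<Rightarrow> nat \<Rightarrow> real" where
  "cluster_assign T = (\<lambda>i. if i \<in> \<Union>T then 1 else -1)"

definition cluster_design :: "nat set set \<Rightarrow> nat \<Rightarrow> (nat \<Rightarrow> real) pmf" where
  "cluster_design C KT = map_pmf cluster_assign (pmf_of_set {T. T \<subseteq> C \<and> card T = KT})"

definition dim_estimator ::
  "nat \<Rightarrow> nat \<Rightarrow> nat \<Rightarrow> (nat \<Rightarrow> (nat \<Rightarrow> real) \<Rightarrow> real) \<Rightarrow> (nat \<Rightarrow> real) \<Rightarrow> real" where
  "dim_estimator N K KT Y Z =
     (let NT = real N * real KT / real K; NC = real N - NT in
      (1 / NT) * (\<Sum>i\<in>{i. i < N \<and> Z i = 1}. Y i Z) - (1 / NC) * (\<Sum>i\<in>{i. i < N \<and> Z i = -1}. Y i Z))"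

definition att :: "nat \<Rightarrow> (nat \<Rightarrow> (nat \<Rightarrow> real) \<Rightarrow> real) \<Rightarrow> real" where
  "att N Y = (1 / real N) * (\<Sum>i<N. Y i (\<lambda>_. 1) - Y i (\<lambda>_. -1))"

definition H_obj :: "(nat \<Rightarrow> nat \<Rightarrow> real) \<Rightarrow> nat \<Rightarrow> nat \<Rightarrow> nat set set \<Rightarrow> real" where
  "H_obj w N M C = (\<Sum>i<N. \<Sum>j\<in>{..<N} - cluster_of C i. \<Sum>s<M.
      (w i s / (\<Sum>s'<M. w i s')) * (w j s / (\<Sum>k<N. w k s)))"

end

theory Submission
  imports Defs
begin

text \<open>Under the cluster design, E Z_i = mu = 2 K_T / K - 1, while E Z_i Z_j is 1 within a
  cluster and a constant rho across clusters. The exposure is linear, e_i = sum_j A_ij Z_j, with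
  rows of A summing to 1, and on +-1 assignments the estimator equals sum_i Y_i (a + b Z_i).
  Taking expectations, the intercepts drop out (a + b mu = 0), the direct effects are estimated
  without bias (a mu + b = 2/N), and each spillover coefficient gamma_i loses
  b (1 - rho) = (2/N) K/(K - 1) times the weight sum_{j not in C(i)} A_ij that unit i receives
  from outside its cluster. The bias is thus linear in gamma with non-negative coefficients, so
  over the box [Gamma_0, Gamma_1]^N its modulus is maximised by the constant gamma of larger
  modulus, and the worst-case bias is a fixed positive multiple of H(C).\<close>

lemma card_subsets_containing:
  assumes "finite A" "F \<subseteq> A" "card F \<le> k"
  shows "card {T. T \<subseteq> A \<and> card T = k \<and> F \<subseteq> T} = (card A - card F) choose (k - card F)"
proof -
  have "finite F" using assms finite_subset by blast
  have "bij_betw (\<lambda>T. T - F) {T. T \<subseteq> A \<and> card T = k \<and> F \<subseteq> T} {T. T \<subseteq> A - F \<and> card T = k - card F}"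
  proof (rule bij_betw_byWitness[where f' = "\<lambda>T. T \<union> F"])
    show "(\<lambda>T. T - F) ` {T. T \<subseteq> A \<and> card T = k \<and> F \<subseteq> T} \<subseteq> {T. T \<subseteq> A - F \<and> card T = k - card F}"
      using \<open>finite F\<close> assms(1) by (auto simp: card_Diff_subset dest: finite_subset)
    show "(\<lambda>T. T \<union> F) ` {T. T \<subseteq> A - F \<and> card T = k - card F} \<subseteq> {T. T \<subseteq> A \<and> card T = k \<and> F \<subseteq> T}"
    proof safe
      fix T assume "T \<subseteq> A - F" "card T = k - card F"
      moreover have "finite T" using \<open>T \<subseteq> A - F\<close> assms(1) finite_subset by blast
      ultimately show "card (T \<union> F) = k"
        using \<open>finite F\<close> assms(3) by (subst card_Un_disjoint) auto
    qed (use assms in auto)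
  qed auto
  then have "card {T. T \<subseteq> A \<and> card T = k \<and> F \<subseteq> T} = card (A - F) choose (k - card F)"
    using assms(1) by (simp add: bij_betw_same_card n_subsets)
  then show ?thesis
    using assms \<open>finite F\<close> by (simp add: card_Diff_subset)
qed

lemma subsets_of_card_nonempty_finite:
  assumes "finite A" "k \<le> card A"
  shows "{T. T \<subseteq> A \<and> card T = k} \<noteq> {}" "finite {T. T \<subseteq> A \<and> card T = k}"
  using assms card_gt_0_iff[of "{T. T \<subseteq> A \<and> card T = k}"] by (simp_all add: n_subsets)

lemma prob_random_subset_contains:
  assumes "finite A" "a \<in> A" "k \<le> card A"
  shows "measure_pmf.prob (pmf_of_set {T. T \<subseteq> A \<and> card T = k}) {T. a \<in> T} = real k / real (card A)"
proof -
  let ?S = "{T. T \<subseteq> A \<and> card T = k}"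
  have "card (?S \<inter> {T. a \<in> T}) * card A = k * card ?S"
  proof (cases "k = 0")
    case True
    then have "?S \<inter> {T. a \<in> T} = {}" using assms(1) by (auto dest: finite_subset)
    then show ?thesis using True by simp
  next
    case False
    have "?S \<inter> {T. a \<in> T} = {T. T \<subseteq> A \<and> card T = k \<and> {a} \<subseteq> T}" by auto
    then have "card (?S \<inter> {T. a \<in> T}) = (card A - 1) choose (k - 1)"
      using assms False card_subsets_containing[of A "{a}" k] by simp
    then show ?thesis
      using False assms(1) by (simp add: n_subsets times_binomial_minus1_eq)
  qed
  then have "real (card (?S \<inter> {T. a \<in> T})) * card A = k * card ?S"
    by (simp only: of_nat_mult [symmetric] of_nat_eq_iff)
  moreover have "card ?S > 0" using assms by (simp add: n_subsets)
  moreover have "?S \<noteq> {}" "finite ?S" using assms subsets_of_card_nonempty_finite by auto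
  moreover have "card A > 0" using assms(1,2) card_gt_0_iff by blast
  ultimately show ?thesis
    by (simp add: measure_pmf_of_set frac_eq_eq)
qed

lemma prob_random_subset_contains_both:
  assumes "finite A" "a \<in> A" "b \<in> A" "a \<noteq> b" "k \<le> card A"
  shows "measure_pmf.prob (pmf_of_set {T. T \<subseteq> A \<and> card T = k}) {T. a \<in> T \<and> b \<in> T}
    = real k * (real k - 1) / (real (card A) * (real (card A) - 1))"
proof -
  let ?S = "{T. T \<subseteq> A \<and> card T = k}"
  have "card (?S \<inter> {T. a \<in> T \<and> b \<in> T}) * (card A * (card A - 1)) = k * (k - 1) * card ?S"
  proof (cases "k \<le> 1")
    case True
    have two: "2 \<le> card T" if "T \<subseteq> A" "a \<in> T" "b \<in> T" for T
    proof -
      have "finite T" using that(1) assms(1) finite_subset by blast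
      then show ?thesis using card_mono[of T "{a, b}"] that assms(4) by simp
    qed
    have "card T \<noteq> k" if "T \<subseteq> A" "a \<in> T" "b \<in> T" for T
      using two[OF that] True by linarith
    then have "?S \<inter> {T. a \<in> T \<and> b \<in> T} = {}" by blast
    then show ?thesis using True by (cases k) auto
  next
    case False
    have "?S \<inter> {T. a \<in> T \<and> b \<in> T} = {T. T \<subseteq> A \<and> card T = k \<and> {a, b} \<subseteq> T}" by auto
    then have "card (?S \<inter> {T. a \<in> T \<and> b \<in> T}) = (card A - 2) choose (k - 2)"
      using assms False card_subsets_containing[of A "{a, b}" k] by (simp add: numeral_2_eq_2)
    have "k * (k - 1) * (card A choose k) = (k - 1) * (k * (card A choose k))"
      by (simp only: ac_simps)
    also have "\<dots> = card A * ((k - 1) * ((card A - 1) choose (k - 1)))"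
      using False times_binomial_minus1_eq[of k "card A"] by simp
    also have "\<dots> = card A * (card A - 1) * ((card A - 2) choose (k - 2))"
      using False times_binomial_minus1_eq[of "k - 1" "card A - 1"] by (simp add: numeral_2_eq_2)
    finally show ?thesis
      using \<open>card (?S \<inter> _) = _\<close> assms(1) by (simp add: n_subsets)
  qed
  then have "real (card (?S \<inter> {T. a \<in> T \<and> b \<in> T})) * (card A * (card A - 1)) = k * (k - 1) * card ?S"
    by (simp only: of_nat_mult [symmetric] of_nat_eq_iff)
  moreover have "card ?S > 0" using assms by (simp add: n_subsets)
  moreover have "?S \<noteq> {}" "finite ?S" using assms subsets_of_card_nonempty_finite by auto
  moreover have "card A > 1" using assms card_mono[of A "{a, b}"] by simp
  ultimately show ?thesis
    by (cases "k = 0") (simp_all add: measure_pmf_of_set frac_eq_eq of_nat_diff)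
qed

lemma expectation_pm_one:
  fixes p :: "'a pmf"
  shows "measure_pmf.expectation p (\<lambda>x. if x \<in> E then 1 else -1 :: real) = 2 * measure_pmf.prob p E - 1"
proof -
  have "(\<lambda>x. if x \<in> E then 1 else -1 :: real) = (\<lambda>x. 2 * indicator E x - 1)"
    by (auto simp: indicator_def)
  then show ?thesis
    by (simp add: integral_indicator integral_diff measure_pmf.emeasure_eq_measure)
qed

lemma expectation_pm_one_mult:
  fixes p :: "'a pmf"
  shows "measure_pmf.expectation p (\<lambda>x. (if x \<in> E then 1 else -1) * (if x \<in> F then 1 else -1) :: real)
    = 4 * measure_pmf.prob p (E \<inter> F) - 2 * measure_pmf.prob p E - 2 * measure_pmf.prob p F + 1"
proof -
  have "(\<lambda>x. (if x \<in> E then 1 else -1) * (if x \<in> F then 1 else -1) :: real)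
     = (\<lambda>x. 4 * indicator (E \<inter> F) x - 2 * indicator E x - 2 * indicator F x + 1)"
    by (auto simp: indicator_def)
  then show ?thesis
    by (simp add: integral_indicator integral_diff integral_add measure_pmf.emeasure_eq_measure)
qed

lemma expectation_quadratic:
  fixes p :: "(nat \<Rightarrow> real) pmf"
  assumes "finite (set_pmf p)"
  shows "measure_pmf.expectation p (\<lambda>Z. (\<alpha> + \<beta> * Z i + \<gamma> * (\<Sum>j<N. A j * Z j)) * (a + b * Z i))
    = \<alpha> * (a + b * measure_pmf.expectation p (\<lambda>Z. Z i))
      + \<beta> * (a * measure_pmf.expectation p (\<lambda>Z. Z i) + b * measure_pmf.expectation p (\<lambda>Z. Z i * Z i))
      + \<gamma> * (\<Sum>j<N. A j * (a * measure_pmf.expectation p (\<lambda>Z. Z j) + b * measure_pmf.expectation p (\<lambda>Z. Z i * Z j)))"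
proof -
  have "(\<lambda>Z. (\<alpha> + \<beta> * Z i + \<gamma> * (\<Sum>j<N. A j * Z j)) * (a + b * Z i))
    = (\<lambda>Z. \<alpha> * a + \<alpha> * b * Z i + \<beta> * a * Z i + \<beta> * b * (Z i * Z i)
          + (\<Sum>j<N. \<gamma> * A j * a * Z j + \<gamma> * A j * b * (Z i * Z j)))"
    by (auto simp: algebra_simps sum_distrib_left sum_distrib_right sum.distrib)
  moreover have "integrable p f" for f :: "(nat \<Rightarrow> real) \<Rightarrow> real"
    using assms by (rule integrable_measure_pmf_finite)
  ultimately show ?thesis
    by (simp add: integral_add integral_sum) (simp add: sum.distrib sum_distrib_left algebra_simps)
qed

lemma partition_on_nonempty_domain:
  assumes "partition_on A C" "C \<noteq> {}"
  shows "A \<noteq> {}"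
  using assms partition_onD1 partition_onD3 by fastforce

lemma cluster_of_eq:
  assumes "partition_on A C" "c \<in> C" "i \<in> c"
  shows "cluster_of C i = c"
  unfolding cluster_of_def
proof (rule the_equality)
  show "c \<in> C \<and> i \<in> c" using assms(2,3) ..
  show "d = c" if "d \<in> C \<and> i \<in> d" for d
    using that assms disjointD[OF partition_onD2[OF assms(1)]] by blast
qed

lemma cluster_of_mem:
  assumes "partition_on A C" "i \<in> A"
  shows "cluster_of C i \<in> C" "i \<in> cluster_of C i"
proof -
  obtain c where "c \<in> C" "i \<in> c" using assms partition_onD1[OF assms(1)] by blast
  then show "cluster_of C i \<in> C" "i \<in> cluster_of C i" using cluster_of_eq[OF assms(1)] by simp_all
qed

lemma cluster_assign_eq:
  assumes "partition_on A C" "T \<subseteq> C"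
  shows "cluster_assign T = (\<lambda>i. if i \<in> A \<and> cluster_of C i \<in> T then 1 else -1)"
proof -
  have "i \<in> \<Union>T \<longleftrightarrow> i \<in> A \<and> cluster_of C i \<in> T" for i
    using assms cluster_of_eq[OF assms(1)] cluster_of_mem[OF assms(1)] partition_onD1[OF assms(1)]
    by blast
  then show ?thesis by (simp add: cluster_assign_def)
qed

lemma finite_set_pmf_cluster_design:
  assumes "finite C" "KT \<le> card C"
  shows "finite (set_pmf (cluster_design C KT))"
  using subsets_of_card_nonempty_finite[OF assms] by (simp add: cluster_design_def)

lemma set_pmf_cluster_design_pm_one:
  assumes "Z \<in> set_pmf (cluster_design C KT)"
  shows "Z i = 1 \<or> Z i = -1"
  using assms by (auto simp: cluster_design_def cluster_assign_def split: if_splits)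

lemma expectation_cluster_design:
  fixes f :: "(nat \<Rightarrow> real) \<Rightarrow> real"
  assumes "partition_on A C" "finite A" "KT \<le> card C"
  shows "measure_pmf.expectation (cluster_design C KT) f
    = measure_pmf.expectation (pmf_of_set {T. T \<subseteq> C \<and> card T = KT})
        (\<lambda>T. f (\<lambda>i. if i \<in> A \<and> cluster_of C i \<in> T then 1 else -1))"
proof -
  have "finite C" using assms(1,2) finite_elements by blast
  then show ?thesis
    using subsets_of_card_nonempty_finite[OF \<open>finite C\<close> assms(3)]
    unfolding cluster_design_def integral_map_pmf
    by (intro integral_cong_AE) (auto simp: AE_measure_pmf_iff cluster_assign_eq[OF assms(1)])
qed

lemma expectation_cluster_design_unit:
  assumes "partition_on A C" "finite A" "KT \<le> card C" "i \<in> A"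
  shows "measure_pmf.expectation (cluster_design C KT) (\<lambda>Z. Z i) = 2 * real KT / real (card C) - 1"
proof -
  have "finite C" using assms(1,2) finite_elements by blast
  then show ?thesis
    using expectation_pm_one[of _ "{T. cluster_of C i \<in> T}"] assms cluster_of_mem[OF assms(1,4)]
    by (simp add: expectation_cluster_design prob_random_subset_contains)
qed

lemma expectation_cluster_design_pair:
  assumes "partition_on A C" "finite A" "KT \<le> card C" "i \<in> A" "j \<in> A"
  shows "measure_pmf.expectation (cluster_design C KT) (\<lambda>Z. Z i * Z j)
    = (if j \<in> cluster_of C i then 1
       else 4 * (real KT * (real KT - 1) / (real (card C) * (real (card C) - 1)))
         - 4 * (real KT / real (card C)) + 1)"
proof -
  let ?p = "pmf_of_set {T. T \<subseteq> C \<and> card T = KT}"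
  have "finite C" using assms(1,2) finite_elements by blast
  have "measure_pmf.expectation (cluster_design C KT) (\<lambda>Z. Z i * Z j)
    = 4 * measure_pmf.prob ?p ({T. cluster_of C i \<in> T} \<inter> {T. cluster_of C j \<in> T})
      - 2 * measure_pmf.prob ?p {T. cluster_of C i \<in> T} - 2 * measure_pmf.prob ?p {T. cluster_of C j \<in> T} + 1"
    using expectation_pm_one_mult[of ?p "{T. cluster_of C i \<in> T}" "{T. cluster_of C j \<in> T}"] assms
    by (simp add: expectation_cluster_design)
  moreover have "{T. cluster_of C i \<in> T} \<inter> {T. cluster_of C j \<in> T} = {T. cluster_of C i \<in> T \<and> cluster_of C j \<in> T}"
    by blast
  moreover have "cluster_of C i = cluster_of C j \<longleftrightarrow> j \<in> cluster_of C i"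
    using cluster_of_eq[OF assms(1)] cluster_of_mem[OF assms(1)] assms(4,5) by metis
  ultimately show ?thesis
    using \<open>finite C\<close> assms cluster_of_mem[OF assms(1)]
    by (auto simp: prob_random_subset_contains prob_random_subset_contains_both)
qed

definition exposure_weight :: "(nat \<Rightarrow> nat \<Rightarrow> real) \<Rightarrow> nat \<Rightarrow> nat \<Rightarrow> nat \<Rightarrow> nat \<Rightarrow> real" where
  "exposure_weight w N M i j = (\<Sum>s<M. (w i s / (\<Sum>s'<M. w i s')) * (w j s / (\<Sum>k<N. w k s)))"

lemma exposure_eq_sum: "exposure w N M i Z = (\<Sum>j<N. exposure_weight w N M i j * Z j)"
proof -
  have "exposure w N M i Z = (\<Sum>s<M. \<Sum>j<N. (w i s / (\<Sum>s'<M. w i s')) * (w j s / (\<Sum>k<N. w k s)) * Z j)"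
    unfolding exposure_def dose_def
    by (simp add: sum_divide_distrib sum_distrib_left mult_ac)
  also have "\<dots> = (\<Sum>j<N. exposure_weight w N M i j * Z j)"
    unfolding exposure_weight_def by (subst sum.swap) (simp add: sum_distrib_right)
  finally show ?thesis .
qed

lemma sum_exposure_weight:
  assumes "(\<Sum>s<M. w i s) \<noteq> 0" "\<forall>s<M. (\<Sum>k<N. w k s) \<noteq> 0"
  shows "(\<Sum>j<N. exposure_weight w N M i j) = 1"
proof -
  have "(\<Sum>j<N. exposure_weight w N M i j) = (\<Sum>s<M. w i s / (\<Sum>s'<M. w i s') * ((\<Sum>j<N. w j s) / (\<Sum>k<N. w k s)))"
    unfolding exposure_weight_def
    by (subst sum.swap) (simp only: sum_distrib_left[symmetric] sum_divide_distrib[symmetric])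
  also have "\<dots> = (\<Sum>s<M. w i s) / (\<Sum>s'<M. w i s')"
    using assms(2) by (simp flip: sum_divide_distrib)
  finally show ?thesis using assms(1) by (simp flip: sum_divide_distrib)
qed

lemma exposure_weight_nonneg:
  assumes "\<forall>i<N. \<forall>s<M. w i s \<ge> 0" "i < N" "j < N"
  shows "exposure_weight w N M i j \<ge> 0"
  unfolding exposure_weight_def using assms
  by (intro sum_nonneg mult_nonneg_nonneg divide_nonneg_nonneg) auto

lemma att_lin_outcome:
  assumes "\<forall>i<N. (\<Sum>s<M. w i s) \<noteq> 0" "\<forall>s<M. (\<Sum>k<N. w k s) \<noteq> 0"
  shows "att N (lin_outcome w N M \<alpha> \<beta> \<gamma>) = (\<Sum>i<N. 2 * \<beta> i + 2 * \<gamma> i) / N"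
proof -
  have "exposure w N M i (\<lambda>_. c) = c" if "i < N" for i c
  proof -
    have "(\<Sum>j<N. exposure_weight w N M i j) = 1"
      using assms that by (intro sum_exposure_weight) auto
    then show ?thesis by (simp add: exposure_eq_sum flip: sum_distrib_right)
  qed
  then show ?thesis
    unfolding att_def lin_outcome_def by (simp add: field_simps)
qed

lemma dim_estimator_eq_sum:
  fixes N K KT :: nat and nt :: real and Z :: "nat \<Rightarrow> real"
  defines "nt \<equiv> real N * real KT / real K"
  assumes "\<forall>i<N. Z i = 1 \<or> Z i = -1"
  shows "dim_estimator N K KT Y Z
    = (\<Sum>i<N. Y i Z * ((1 / nt - 1 / (N - nt)) / 2 + (1 / nt + 1 / (N - nt)) / 2 * Z i))"
proof -
  have sign: "u * (if z = 1 then y else 0) - v * (if z = -1 then y else 0) = y * ((u - v) / 2 + (u + v) / 2 * z)"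
    if "z = 1 \<or> z = -1" for u v y z :: real
    using that by (auto simp: field_simps)
  have filter: "{i. i < N \<and> Z i = z} = {i\<in>{..<N}. Z i = z}" for z by auto
  show ?thesis
    unfolding dim_estimator_def Let_def nt_def[symmetric] filter sum.inter_filter[OF finite_lessThan]
      sum_distrib_left sum_subtractf[symmetric]
  proof (intro sum.cong refl)
    fix i assume "i \<in> {..<N}"
    then show "1 / nt * (if Z i = 1 then Y i Z else 0) - 1 / (N - nt) * (if Z i = -1 then Y i Z else 0)
      = Y i Z * ((1 / nt - 1 / (N - nt)) / 2 + (1 / nt + 1 / (N - nt)) / 2 * Z i)"
      using assms(2) by (intro sign) auto
  qed
qed

lemma expectation_dim_estimator:
  fixes N K KT :: nat and nt :: real and p :: "(nat \<Rightarrow> real) pmf"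
  defines "nt \<equiv> real N * real KT / real K"
  assumes "finite (set_pmf p)" "\<And>Z i. Z \<in> set_pmf p \<Longrightarrow> Z i = 1 \<or> Z i = -1"
  shows "measure_pmf.expectation p (dim_estimator N K KT Y)
    = (\<Sum>i<N. measure_pmf.expectation p
        (\<lambda>Z. Y i Z * ((1 / nt - 1 / (N - nt)) / 2 + (1 / nt + 1 / (N - nt)) / 2 * Z i)))"
proof -
  have "integrable p f" for f :: "(nat \<Rightarrow> real) \<Rightarrow> real"
    using assms(2) by (rule integrable_measure_pmf_finite)
  moreover have "measure_pmf.expectation p (dim_estimator N K KT Y)
    = measure_pmf.expectation p
        (\<lambda>Z. \<Sum>i<N. Y i Z * ((1 / nt - 1 / (N - nt)) / 2 + (1 / nt + 1 / (N - nt)) / 2 * Z i))"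
    unfolding nt_def using assms(3)
    by (intro integral_cong_AE) (auto simp: AE_measure_pmf_iff dim_estimator_eq_sum)
  ultimately show ?thesis by (simp add: integral_sum)
qed

text \<open>mu and rho are the design moments E Z_i and, for units in different clusters, E Z_i Z_j;
  a + b Z_i is the weight of Y_i in the difference-in-means estimator.\<close>

lemma dim_weight_identities:
  fixes n k kt :: real
  assumes "n \<noteq> 0" "k \<noteq> 0" "k \<noteq> 1" "kt \<noteq> 0" "kt \<noteq> k"
  defines "nt \<equiv> n * kt / k"
  defines "a \<equiv> (1 / nt - 1 / (n - nt)) / 2" and "b \<equiv> (1 / nt + 1 / (n - nt)) / 2"
  defines "\<mu> \<equiv> 2 * kt / k - 1"
  defines "\<rho> \<equiv> 4 * (kt * (kt - 1) / (k * (k - 1))) - 4 * (kt / k) + 1"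
  shows "a + b * \<mu> = 0" "a * \<mu> + b = 2 / n" "b * (1 - \<rho>) = 2 / n * (k / (k - 1))"
proof -
  have "k - kt \<noteq> 0" "k - 1 \<noteq> 0" using assms by auto
  define e where "e = 2 * kt * (k - kt)"
  define d where "d = n * e"
  have "e \<noteq> 0" "d \<noteq> 0" unfolding d_def e_def using assms \<open>k - kt \<noteq> 0\<close> by simp_all
  have "n - nt = n * (k - kt) / k" unfolding nt_def using assms by (simp add: field_simps)
  then have a: "a = k * (k - 2 * kt) / d" and b: "b = k * k / d"
    unfolding a_def b_def nt_def d_def e_def using assms \<open>k - kt \<noteq> 0\<close> by (simp_all add: field_simps)
  have \<mu>: "k * \<mu> = 2 * kt - k" unfolding \<mu>_def using assms by (simp add: field_simps)
  have \<rho>: "1 - \<rho> = 2 * e / (k * (k - 1))"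
    unfolding \<rho>_def e_def using assms \<open>k - 1 \<noteq> 0\<close> by (simp add: field_simps)
  have "a + b * \<mu> = (k * (k - 2 * kt) + k * (k * \<mu>)) / d" unfolding a b by (simp add: add_divide_distrib)
  then show "a + b * \<mu> = 0" unfolding \<mu> by (simp add: algebra_simps)
  have "a * \<mu> + b = ((k - 2 * kt) * (k * \<mu>) + k * k) / d" unfolding a b using \<open>d \<noteq> 0\<close> by (simp add: field_simps)
  also have "\<dots> = 2 * e / (n * e)" unfolding \<mu> d_def e_def by (simp add: algebra_simps)
  finally show "a * \<mu> + b = 2 / n" using \<open>e \<noteq> 0\<close> by simp
  show "b * (1 - \<rho>) = 2 / n * (k / (k - 1))"
    unfolding b \<rho> d_def using assms \<open>e \<noteq> 0\<close> \<open>k - 1 \<noteq> 0\<close> by (simp add: field_simps)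
qed

lemma sum_cluster_split:
  fixes A :: "nat \<Rightarrow> real"
  assumes "(\<Sum>j<N. A j) = 1"
  shows "(\<Sum>j<N. A j * (x + y * (if j \<in> c then 1 else \<rho>))) = x + y - y * (1 - \<rho>) * (\<Sum>j\<in>{..<N} - c. A j)"
proof -
  have "(\<Sum>j<N. A j * (x + y * (if j \<in> c then 1 else \<rho>)))
    = (\<Sum>j<N. (x + y) * A j - y * (1 - \<rho>) * (if j \<notin> c then A j else 0))"
    by (intro sum.cong refl) (simp add: algebra_simps)
  also have "\<dots> = (x + y) * (\<Sum>j<N. A j) - y * (1 - \<rho>) * (\<Sum>j<N. if j \<notin> c then A j else 0)"
    by (simp add: sum_subtractf sum_distrib_left)
  also have "(\<Sum>j<N. if j \<notin> c then A j else 0) = (\<Sum>j\<in>{..<N} - c. A j)"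
    by (simp add: sum.inter_filter[symmetric] set_diff_eq)
  finally show ?thesis using assms by simp
qed

lemma expectation_dim_lin_outcome:
  fixes N M K KT :: nat and nt a b \<mu> \<rho> :: real
  defines "nt \<equiv> real N * real KT / real K"
  defines "a \<equiv> (1 / nt - 1 / (N - nt)) / 2" and "b \<equiv> (1 / nt + 1 / (N - nt)) / 2"
  defines "\<mu> \<equiv> 2 * real KT / real K - 1"
  defines "\<rho> \<equiv> 4 * (real KT * (real KT - 1) / (real K * (real K - 1))) - 4 * (real KT / real K) + 1"
  assumes C: "partition_on {..<N} C" "card C = K" "KT \<le> K"
    and W: "\<forall>i<N. (\<Sum>s<M. w i s) \<noteq> 0" and V: "\<forall>s<M. (\<Sum>k<N. w k s) \<noteq> 0"
  shows "measure_pmf.expectation (cluster_design C KT) (dim_estimator N K KT (lin_outcome w N M \<alpha> \<beta> \<gamma>))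
    = (\<Sum>i<N. \<alpha> i * (a + b * \<mu>) + \<beta> i * (a * \<mu> + b)
        + \<gamma> i * (a * \<mu> + b - b * (1 - \<rho>) * (\<Sum>j\<in>{..<N} - cluster_of C i. exposure_weight w N M i j)))"
proof -
  let ?Y = "lin_outcome w N M \<alpha> \<beta> \<gamma>"
  let ?p = "cluster_design C KT"
  have "finite C" using C(1) finite_elements by blast
  then have fin: "finite (set_pmf ?p)" using C(2,3) by (simp add: finite_set_pmf_cluster_design)
  have unit: "measure_pmf.expectation ?p (\<lambda>Z. Z i) = \<mu>" if "i < N" for i
    using expectation_cluster_design_unit[OF C(1)] C(2,3) that by (simp add: \<mu>_def)
  have pair: "measure_pmf.expectation ?p (\<lambda>Z. Z i * Z j) = (if j \<in> cluster_of C i then 1 else \<rho>)"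
    if "i < N" "j < N" for i j
    using expectation_cluster_design_pair[OF C(1)] C(2,3) that by (simp add: \<rho>_def)
  have "measure_pmf.expectation ?p (dim_estimator N K KT ?Y)
      = (\<Sum>i<N. measure_pmf.expectation ?p (\<lambda>Z. ?Y i Z * (a + b * Z i)))"
    unfolding a_def b_def nt_def using fin set_pmf_cluster_design_pm_one
    by (rule expectation_dim_estimator)
  also have "\<dots> = (\<Sum>i<N. \<alpha> i * (a + b * \<mu>) + \<beta> i * (a * \<mu> + b)
        + \<gamma> i * (a * \<mu> + b - b * (1 - \<rho>) * (\<Sum>j\<in>{..<N} - cluster_of C i. exposure_weight w N M i j)))"
  proof (intro sum.cong refl)
    fix i assume "i \<in> {..<N}"
    then have "i < N" by simp
    have "measure_pmf.expectation ?p (\<lambda>Z. ?Y i Z * (a + b * Z i))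
      = \<alpha> i * (a + b * \<mu>) + \<beta> i * (a * \<mu> + b)
        + \<gamma> i * (\<Sum>j<N. exposure_weight w N M i j * (a * \<mu> + b * (if j \<in> cluster_of C i then 1 else \<rho>)))"
      unfolding lin_outcome_def exposure_eq_sum expectation_quadratic[OF fin]
      using unit pair \<open>i < N\<close> cluster_of_mem[OF C(1), of i] by simp
    also have "(\<Sum>j<N. exposure_weight w N M i j * (a * \<mu> + b * (if j \<in> cluster_of C i then 1 else \<rho>)))
      = a * \<mu> + b - b * (1 - \<rho>) * (\<Sum>j\<in>{..<N} - cluster_of C i. exposure_weight w N M i j)"
      using W V \<open>i < N\<close> by (intro sum_cluster_split sum_exposure_weight) auto
    finally show "measure_pmf.expectation ?p (\<lambda>Z. ?Y i Z * (a + b * Z i))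
      = \<alpha> i * (a + b * \<mu>) + \<beta> i * (a * \<mu> + b)
        + \<gamma> i * (a * \<mu> + b - b * (1 - \<rho>) * (\<Sum>j\<in>{..<N} - cluster_of C i. exposure_weight w N M i j))" .
  qed
  finally show ?thesis .
qed

lemma bias_dim_lin_outcome:
  fixes N M K KT :: nat
  assumes C: "partition_on {..<N} C" "card C = K" and KT: "0 < KT" "KT < K"
    and W: "\<forall>i<N. (\<Sum>s<M. w i s) \<noteq> 0" and V: "\<forall>s<M. (\<Sum>k<N. w k s) \<noteq> 0"
  shows "att N (lin_outcome w N M \<alpha> \<beta> \<gamma>)
      - measure_pmf.expectation (cluster_design C KT) (dim_estimator N K KT (lin_outcome w N M \<alpha> \<beta> \<gamma>))
    = 2 / real N * (real K / (real K - 1)) * (\<Sum>i<N. \<gamma> i * (\<Sum>j\<in>{..<N} - cluster_of C i. exposure_weight w N M i j))"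
proof -
  define c where "c = 2 / real N * (real K / (real K - 1))"
  define h where "h i = (\<Sum>j\<in>{..<N} - cluster_of C i. exposure_weight w N M i j)" for i
  have "C \<noteq> {}" using C(2) KT by auto
  then have "N \<noteq> 0" using partition_on_nonempty_domain[OF C(1)] by (simp add: lessThan_empty_iff)
  then have nz: "real N \<noteq> 0" "real K \<noteq> 0" "real K \<noteq> 1" "real KT \<noteq> 0" "real KT \<noteq> real K"
    using KT by auto
  have "measure_pmf.expectation (cluster_design C KT) (dim_estimator N K KT (lin_outcome w N M \<alpha> \<beta> \<gamma>))
    = (\<Sum>i<N. \<alpha> i * 0 + \<beta> i * (2 / N) + \<gamma> i * (2 / N - c * h i))"
    using expectation_dim_lin_outcome[OF C less_imp_le[OF KT(2)] W V]
    unfolding dim_weight_identities[OF nz] c_def h_def .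
  then have "att N (lin_outcome w N M \<alpha> \<beta> \<gamma>)
      - measure_pmf.expectation (cluster_design C KT) (dim_estimator N K KT (lin_outcome w N M \<alpha> \<beta> \<gamma>))
    = (\<Sum>i<N. (2 * \<beta> i + 2 * \<gamma> i) / N - (\<beta> i * (2 / N) + \<gamma> i * (2 / N - c * h i)))"
    unfolding att_lin_outcome[OF W V] by (simp add: sum_subtractf sum_divide_distrib)
  also have "\<dots> = c * (\<Sum>i<N. \<gamma> i * h i)"
    unfolding sum_distrib_left by (intro sum.cong refl) (simp add: algebra_simps add_divide_distrib)
  finally show ?thesis unfolding c_def h_def .
qed

lemma SUP_abs_weighted_sum_box:
  fixes h :: "nat \<Rightarrow> real"
  assumes "\<forall>i<N. 0 \<le> h i" "\<Gamma>0 \<le> \<Gamma>1"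
  shows "(SUP \<gamma>\<in>{\<gamma>. \<forall>i<N. \<Gamma>0 \<le> \<gamma> i \<and> \<gamma> i \<le> \<Gamma>1}. \<bar>\<Sum>i<N. \<gamma> i * h i\<bar>)
    = max \<bar>\<Gamma>0\<bar> \<bar>\<Gamma>1\<bar> * (\<Sum>i<N. h i)"
proof (rule cSup_eq_maximum)
  let ?m = "max \<bar>\<Gamma>0\<bar> \<bar>\<Gamma>1\<bar>"
  let ?g = "if \<bar>\<Gamma>0\<bar> \<le> \<bar>\<Gamma>1\<bar> then \<Gamma>1 else \<Gamma>0"
  have "(\<Sum>i<N. h i) \<ge> 0" using assms(1) by (auto intro: sum_nonneg)
  then have "\<bar>\<Sum>i<N. ?g * h i\<bar> = ?m * (\<Sum>i<N. h i)"
    by (simp add: sum_distrib_left[symmetric] abs_mult)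
  then show "?m * (\<Sum>i<N. h i) \<in> (\<lambda>\<gamma>. \<bar>\<Sum>i<N. \<gamma> i * h i\<bar>) ` {\<gamma>. \<forall>i<N. \<Gamma>0 \<le> \<gamma> i \<and> \<gamma> i \<le> \<Gamma>1}"
    using assms(2) by (intro image_eqI[where x = "\<lambda>_. ?g"]) auto
  show "x \<le> ?m * (\<Sum>i<N. h i)"
    if x_mem: "x \<in> (\<lambda>\<gamma>. \<bar>\<Sum>i<N. \<gamma> i * h i\<bar>) ` {\<gamma>. \<forall>i<N. \<Gamma>0 \<le> \<gamma> i \<and> \<gamma> i \<le> \<Gamma>1}" for x
  proof -
    obtain \<gamma> where \<gamma>: "\<forall>i<N. \<Gamma>0 \<le> \<gamma> i \<and> \<gamma> i \<le> \<Gamma>1" and x: "x = \<bar>\<Sum>i<N. \<gamma> i * h i\<bar>"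
      using x_mem by blast
    have "x \<le> (\<Sum>i<N. \<bar>\<gamma> i\<bar> * h i)"
      unfolding x using sum_abs[of "\<lambda>i. \<gamma> i * h i" "{..<N}"] assms(1) by (simp add: abs_mult)
    also have "\<dots> \<le> (\<Sum>i<N. ?m * h i)"
      using \<gamma> assms(1) by (intro sum_mono mult_right_mono) auto
    finally show ?thesis by (simp add: sum_distrib_left)
  qed
qed

lemma worst_case_bias_dim_lin_outcome:
  fixes N M K KT :: nat
  assumes C: "partition_on {..<N} C" "card C = K" and KT: "0 < KT" "KT < K"
    and w: "\<forall>i<N. \<forall>s<M. 0 \<le> w i s"
    and W: "\<forall>i<N. (\<Sum>s<M. w i s) \<noteq> 0" and V: "\<forall>s<M. (\<Sum>k<N. w k s) \<noteq> 0"
    and "\<Gamma>0 \<le> \<Gamma>1"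
  shows "(SUP \<gamma>\<in>{\<gamma>. \<forall>i<N. \<Gamma>0 \<le> \<gamma> i \<and> \<gamma> i \<le> \<Gamma>1}.
           \<bar>att N (lin_outcome w N M \<alpha> \<beta> \<gamma>)
             - measure_pmf.expectation (cluster_design C KT) (dim_estimator N K KT (lin_outcome w N M \<alpha> \<beta> \<gamma>))\<bar>)
    = 2 / real N * (real K / (real K - 1)) * max \<bar>\<Gamma>0\<bar> \<bar>\<Gamma>1\<bar> * H_obj w N M C"
proof -
  define c where "c = 2 / real N * (real K / (real K - 1))"
  define h where "h i = c * (\<Sum>j\<in>{..<N} - cluster_of C i. exposure_weight w N M i j)" for i
  have "c \<ge> 0" unfolding c_def using KT by simp
  then have "\<forall>i<N. 0 \<le> h i"
    unfolding h_def using exposure_weight_nonneg[OF w] by (auto intro!: mult_nonneg_nonneg sum_nonneg)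
  moreover have "(\<Sum>i<N. h i) = c * H_obj w N M C"
    unfolding h_def H_obj_def exposure_weight_def by (simp add: sum_distrib_left)
  moreover have "att N (lin_outcome w N M \<alpha> \<beta> \<gamma>)
      - measure_pmf.expectation (cluster_design C KT) (dim_estimator N K KT (lin_outcome w N M \<alpha> \<beta> \<gamma>))
    = (\<Sum>i<N. \<gamma> i * h i)" for \<gamma>
    unfolding bias_dim_lin_outcome[OF C KT W V] h_def c_def[symmetric] by (simp add: sum_distrib_left mult_ac)
  ultimately show ?thesis
    using SUP_abs_weighted_sum_box[of N h] \<open>\<Gamma>0 \<le> \<Gamma>1\<close> by (simp add: c_def mult_ac)
qed

lemma minimizers_eq_pos_scaled:
  fixes f g :: "'a \<Rightarrow> real"
  assumes "\<And>x. P x \<Longrightarrow> f x = c * g x" "\<And>x. P x \<Longrightarrow> 0 < c"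
  shows "{x. P x \<and> (\<forall>y. P y \<longrightarrow> f x \<le> f y)} = {x. P x \<and> (\<forall>y. P y \<longrightarrow> g x \<le> g y)}"
  using assms by (auto simp: mult_le_cancel_left_pos)

theorem lemma1:
  fixes N M K KT :: nat and w :: "nat \<Rightarrow> nat \<Rightarrow> real" and \<alpha> \<beta> :: "nat \<Rightarrow> real"
  assumes "K \<ge> 2" and "K dvd N" and "0 < KT" and "KT < K"
    and "\<forall>i<N. \<forall>s<M. w i s \<ge> 0"
    and "\<forall>i<N. (\<Sum>s<M. w i s) > 0"
    and "\<forall>s<M. (\<Sum>i<N. w i s) > 0"
  shows "(\<forall>C \<gamma>. balanced_partition N K C \<longrightarrow>
            att N (lin_outcome w N M \<alpha> \<beta> \<gamma>)
              - measure_pmf.expectation (cluster_design C KT)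
                  (dim_estimator N K KT (lin_outcome w N M \<alpha> \<beta> \<gamma>))
            = 2 / real N * (real K / (real K - 1)) *
              (\<Sum>i<N. \<Sum>j\<in>{..<N} - cluster_of C i. \<gamma> i * (\<Sum>s<M.
                  (w i s / (\<Sum>s'<M. w i s')) * (w j s / (\<Sum>k<N. w k s))))) \<and>
         (\<forall>\<Gamma>0 \<Gamma>1 :: real. \<Gamma>0 \<le> \<Gamma>1 \<and> \<not> (\<Gamma>0 = 0 \<and> \<Gamma>1 = 0) \<longrightarrow>
            (let F = (\<lambda>C. SUP \<gamma>\<in>{\<gamma>. \<forall>i<N. \<Gamma>0 \<le> \<gamma> i \<and> \<gamma> i \<le> \<Gamma>1}.
                         \<bar>att N (lin_outcome w N M \<alpha> \<beta> \<gamma>)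
                           - measure_pmf.expectation (cluster_design C KT)
                               (dim_estimator N K KT (lin_outcome w N M \<alpha> \<beta> \<gamma>))\<bar>)
             in {C. balanced_partition N K C \<and>
                    (\<forall>C'. balanced_partition N K C' \<longrightarrow> F C \<le> F C')}
              = {C. balanced_partition N K C \<and>
                    (\<forall>C'. balanced_partition N K C' \<longrightarrow> H_obj w N M C \<le> H_obj w N M C')}))"
proof -
  have W: "\<forall>i<N. (\<Sum>s<M. w i s) \<noteq> 0" and V: "\<forall>s<M. (\<Sum>i<N. w i s) \<noteq> 0"
    using assms(6,7) by (auto simp: less_imp_neq[symmetric])
  have C: "partition_on {..<N} C" "card C = K" if "balanced_partition N K C" for C
    using that unfolding balanced_partition_def by blast+
  have N_pos: "0 < N" if "balanced_partition N K C" for C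
  proof -
    have "C \<noteq> {}" using C(2)[OF that] assms(1) by auto
    then show ?thesis using partition_on_nonempty_domain[OF C(1)[OF that]] by (simp add: lessThan_empty_iff)
  qed
  show ?thesis
    unfolding Let_def
    apply (intro conjI allI impI)
    subgoal for C \<gamma>
      using bias_dim_lin_outcome[OF C[of C] assms(3,4) W V] unfolding exposure_weight_def
      by (simp add: sum_distrib_left)
    subgoal for \<Gamma>0 \<Gamma>1
      apply (rule minimizers_eq_pos_scaled[where c = "2 / real N * (real K / (real K - 1)) * max \<bar>\<Gamma>0\<bar> \<bar>\<Gamma>1\<bar>"])
      subgoal for C using worst_case_bias_dim_lin_outcome[OF C[of C] assms(3,4,5) W V] by auto
      subgoal for C using N_pos[of C] assms(1) by (auto intro!: mult_pos_pos)
      done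
    done
qed

end
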